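(* For every context $\Gamma$, terms $M,N,A,B$ and variable $x$: if $\Gamma,x:A\vdash M:B$ and $\Gamma\vdash N:A$, then $\Gamma\vdash M[x:=N]:B[x:=N]$.
   Context: Let $\mathcal V$ (the variables) be a type with decidable equality, equipped with functions $\mathrm{encode}:\mathcal V\to\mathbb N$ and $\mathrm{decode}:\mathbb N\to\mathcal V$ such that $\mathrm{encode}(\mathrm{decode}\,n)=n$ for all $n$. Let $\mathcal C$ (the constants) be any type. Terms $\Lambda$ are generated by: $c\,k$ ($k\in\mathcal C$), $v\,x$ ($x\in\mathcal V$), $\lambda[x:A]M$, $\Pi[x:A]B$ and $M\cdot N$; in $\lambda[x:A]M$ and $\Pi[x:A]B$ the name $x$ binds in $M$ (resp. $B$) but not in $A$. Terms are raw first-order syntax (not identified up to renaming of bound variables) and $\equiv$ denotes syntactic identity. The list of free variables is $\mathrm{fv}(c\,k)=[\,]$, $\mathrm{fv}(v\,x)=[x]$, $\mathrm{fv}(\lambda[x:A]M)=\mathrm{fv}\,A\mathbin{+\!\!+}(\mathrm{fv}\,M-x)$, $\mathrm{fv}(\Pi[x:A]B)=\mathrm{fv}\,A\mathbin{+\!\!+}(\mathrm{fv}\,B-x)$, $\mathrm{fv}(M\cdot N)=\mathrm{fv}\,M\mathbin{+\!\!+}\mathrm{fv}\,N$, where $\mathbin{+\!\!+}$ is list concatenation and $xs-x$ deletes every occurrence of $x$ from $xs$. Fix a function $\chi':\mathrm{List}\,\mathbb N\to\mathbb N$ with $\chi'(ns)\notin ns$ for every list $ns$, and put $X'(xs)=\mathrm{decode}(\chi'(\mathrm{map}\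 \mathrm{encode}\ xs))$. A substitution is any function $\sigma:\mathcal V\to\Lambda$; $\iota=v$ is the identity substitution; $(\sigma,x:=N)(y)=N$ if $y=x$ and $\sigma\,y$ otherwise. For a substitution $\sigma$ and a list $xs$ of variables, $X(\sigma,xs)=X'(\text{concatenation of the lists }\mathrm{fv}(\sigma\,y)\text{ for }y\in xs)$. The action $M\bullet\sigma$ is defined by structural recursion: $c\,k\bullet\sigma=c\,k$; $v\,x\bullet\sigma=\sigma\,x$; $(M\cdot N)\bullet\sigma=(M\bullet\sigma)\cdot(N\bullet\sigma)$; $(\lambda[x:A]M)\bullet\sigma=\lambda[y:A\bullet\sigma](M\bullet(\sigma,x:=v\,y))$ with $y=X(\sigma,\mathrm{fv}\,M-x)$; $(\Pi[x:A]B)\bullet\sigma=\Pi[y:A\bullet\sigma](B\bullet(\sigma,x:=v\,y))$ with $y=X(\sigma,\mathrm{fv}\,B-x)$. Unary substitution is $M[x:=N]=M\bullet(\iota,x:=N)$. $\alpha$-conversion $\sim_\alpha$ is the inductively defined relation with rules: $c\,k\sim_\alpha c\,k$; $v\,x\sim_\alpha v\,x$; $M\cdot N\sim_\alpha M'\cdot N'$ if $M\sim_\alpha M'$ and $N\sim_\alpha N'$; $\lambda[x:A]M\sim_\alpha\lambda[x':A']M'$ if $A\sim_\alpha A'$ and there is a variable $y$ with $y\notin\mathrm{fv}\,M-x$, $y\notin\mathrm{fv}\,M'-x'$ and $M[x:=v\,y]\equiv M'[x':=v\,y]$; and the same rule with $\Pi$ in place of $\lambda$. $\beta$-contraction is $(\lambda[x:A]M)\cdot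 N\ \triangleright_\beta\ M[x:=N]$. One-step $\beta$-reduction $\to_\beta$ is its contextual closure, inductively: $M\to_\beta N$ if $M\triangleright_\beta N$; $\lambda[x:A]M\to_\beta\lambda[x:A]M'$ and $\Pi[x:A]M\to_\beta\Pi[x:A]M'$ if $M\to_\beta M'$; $\lambda[x:A]M\to_\beta\lambda[x:A']M$ and $\Pi[x:A]M\to_\beta\Pi[x:A']M$ if $A\to_\beta A'$; $M\cdot P\to_\beta N\cdot P$ and $P\cdot M\to_\beta P\cdot N$ if $M\to_\beta N$. $\beta$-conversion $\simeq_\beta$ is the equivalence (reflexive–symmetric–transitive) closure of $\sim_\alpha\cup\to_\beta$. Pure Type System: fix a binary relation $\mathcal A\subseteq\mathcal C\times\mathcal C$ (axioms) and a ternary relation $\mathcal R\subseteq\mathcal C\times\mathcal C\times\mathcal C$ (rules). A context is a finite list of pairs $(x,A)$ with $x\in\mathcal V$, $A\in\Lambda$; $\Gamma,x:A$ denotes the list $(x,A)::\Gamma$; $\mathrm{dom}\,\Gamma$ is the list of first components; $(x,A)\in\Gamma$ is list membership. The judgments $\Gamma\ \mathrm{ok}$ and $\Gamma\vdash M:A$ are defined mutually inductively by: (nil) $[\,]\ \mathrm{ok}$; (cons) if $\Gamma\ \mathrm{ok}$, $\Gamma\vdash A:c\,s$ and $x\notin\mathrm{dom}\,\Gamma$ then $\Gamma,x:A\ \mathrm{ok}$; (sort) if $\Gamma\ \mathrm{ok}$ and $\mathcal A\,s_1\,s_2$ then $\Gamma\vdash c\,s_1:c\,s_2$; (var) if $\Gamma\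 \mathrm{ok}$ and $(x,A)\in\Gamma$ then $\Gamma\vdash v\,x:A$; (prod) if $\mathcal R\,s_1\,s_2\,s_3$, $\Gamma\vdash A:c\,s_1$ and for every $y\notin\mathrm{dom}\,\Gamma$, $\Gamma,y:A\vdash B[x:=v\,y]:c\,s_2$, then $\Gamma\vdash\Pi[x:A]B:c\,s_3$; (abs) if $\mathcal R\,s_1\,s_2\,s_3$, $\Gamma\vdash A:c\,s_1$, for every $z\notin\mathrm{dom}\,\Gamma$, $\Gamma,z:A\vdash B[y:=v\,z]:c\,s_2$, and for every $z\notin\mathrm{dom}\,\Gamma$, $\Gamma,z:A\vdash M[x:=v\,z]:B[y:=v\,z]$, then $\Gamma\vdash\lambda[x:A]M:\Pi[y:A]B$; (app) if $\Gamma\vdash M:\Pi[x:A]B$, $\Gamma\vdash N:A$ and $\Gamma\vdash B[x:=N]:c\,s$ for some $s$, then $\Gamma\vdash M\cdot N:B[x:=N]$; (conv) if $\Gamma\vdash M:A$, $A\simeq_\beta B$ and $\Gamma\vdash B:c\,s$ for some $s$, then $\Gamma\vdash M:B$. (The premises quantified over all fresh names in (prod) and (abs) are infinitely branching.) *)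

theory Defs
  imports Main
begin

datatype ('v, 'c) trm =
    Const 'c
  | Var 'v
  | Lam 'v "('v, 'c) trm" "('v, 'c) trm"   \<comment> \<open>Lam x A M  =  lambda[x:A]M\<close>
  | Pi 'v "('v, 'c) trm" "('v, 'c) trm"    \<comment> \<open>Pi x A B  =  Pi[x:A]B\<close>
  | App "('v, 'c) trm" "('v, 'c) trm"

primrec fv :: "('v, 'c) trm \<Rightarrow> 'v list" where
  "fv (Const k) = []"
| "fv (Var x) = [x]"
| "fv (Lam x A M) = fv A @ removeAll x (fv M)"
| "fv (Pi x A B) = fv A @ removeAll x (fv B)"
| "fv (App M N) = fv M @ fv N"

definition Xfresh' :: "('v \<Rightarrow> nat) \<Rightarrow> (nat \<Rightarrow> 'v) \<Rightarrow> (nat list \<Rightarrow> nat) \<Rightarrow> 'v list \<Rightarrow> 'v" where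
  "Xfresh' enc dec chi xs = dec (chi (map enc xs))"

definition Xfresh :: "('v \<Rightarrow> nat) \<Rightarrow> (nat \<Rightarrow> 'v) \<Rightarrow> (nat list \<Rightarrow> nat)
    \<Rightarrow> ('v \<Rightarrow> ('v, 'c) trm) \<Rightarrow> 'v list \<Rightarrow> 'v" where
  "Xfresh enc dec chi \<sigma> xs = Xfresh' enc dec chi (concat (map (\<lambda>y. fv (\<sigma> y)) xs))"

primrec sact :: "('v \<Rightarrow> nat) \<Rightarrow> (nat \<Rightarrow> 'v) \<Rightarrow> (nat list \<Rightarrow> nat)
    \<Rightarrow> ('v, 'c) trm \<Rightarrow> ('v \<Rightarrow> ('v, 'c) trm) \<Rightarrow> ('v, 'c) trm" where
  "sact enc dec chi (Const k) \<sigma> = Const k"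
| "sact enc dec chi (Var x) \<sigma> = \<sigma> x"
| "sact enc dec chi (App M N) \<sigma> = App (sact enc dec chi M \<sigma>) (sact enc dec chi N \<sigma>)"
| "sact enc dec chi (Lam x A M) \<sigma> =
     (let y = Xfresh enc dec chi \<sigma> (removeAll x (fv M))
      in Lam y (sact enc dec chi A \<sigma>) (sact enc dec chi M (\<sigma>(x := Var y))))"
| "sact enc dec chi (Pi x A B) \<sigma> =
     (let y = Xfresh enc dec chi \<sigma> (removeAll x (fv B))
      in Pi y (sact enc dec chi A \<sigma>) (sact enc dec chi B (\<sigma>(x := Var y))))"

definition usubst :: "('v \<Rightarrow> nat) \<Rightarrow> (nat \<Rightarrow> 'v) \<Rightarrow> (nat list \<Rightarrow> nat)
    \<Rightarrow> ('v, 'c) trm \<Rightarrow> 'v \<Rightarrow> ('v, 'c) trm \<Rightarrow> ('v, 'c) trm" where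
  "usubst enc dec chi M x N = sact enc dec chi M (Var(x := N))"

inductive alpha :: "('v \<Rightarrow> nat) \<Rightarrow> (nat \<Rightarrow> 'v) \<Rightarrow> (nat list \<Rightarrow> nat)
    \<Rightarrow> ('v, 'c) trm \<Rightarrow> ('v, 'c) trm \<Rightarrow> bool"
  for enc dec chi where
  alpha_const: "alpha enc dec chi (Const k) (Const k)"
| alpha_var: "alpha enc dec chi (Var x) (Var x)"
| alpha_app: "alpha enc dec chi M M' \<Longrightarrow> alpha enc dec chi N N' \<Longrightarrow>
     alpha enc dec chi (App M N) (App M' N')"
| alpha_lam: "alpha enc dec chi A A' \<Longrightarrow> y \<notin> set (removeAll x (fv M)) \<Longrightarrow>
     y \<notin> set (removeAll x' (fv M')) \<Longrightarrow>
     usubst enc dec chi M x (Var y) = usubst enc dec chi M' x' (Var y) \<Longrightarrow>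
     alpha enc dec chi (Lam x A M) (Lam x' A' M')"
| alpha_pi: "alpha enc dec chi A A' \<Longrightarrow> y \<notin> set (removeAll x (fv M)) \<Longrightarrow>
     y \<notin> set (removeAll x' (fv M')) \<Longrightarrow>
     usubst enc dec chi M x (Var y) = usubst enc dec chi M' x' (Var y) \<Longrightarrow>
     alpha enc dec chi (Pi x A M) (Pi x' A' M')"

inductive beta_contr :: "('v \<Rightarrow> nat) \<Rightarrow> (nat \<Rightarrow> 'v) \<Rightarrow> (nat list \<Rightarrow> nat)
    \<Rightarrow> ('v, 'c) trm \<Rightarrow> ('v, 'c) trm \<Rightarrow> bool"
  for enc dec chi where
  "beta_contr enc dec chi (App (Lam x A M) N) (usubst enc dec chi M x N)"

inductive beta :: "('v \<Rightarrow> nat) \<Rightarrow> (nat \<Rightarrow> 'v) \<Rightarrow> (nat list \<Rightarrow> nat)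
    \<Rightarrow> ('v, 'c) trm \<Rightarrow> ('v, 'c) trm \<Rightarrow> bool"
  for enc dec chi where
  beta_base: "beta_contr enc dec chi M N \<Longrightarrow> beta enc dec chi M N"
| beta_lam_body: "beta enc dec chi M M' \<Longrightarrow> beta enc dec chi (Lam x A M) (Lam x A M')"
| beta_pi_body: "beta enc dec chi M M' \<Longrightarrow> beta enc dec chi (Pi x A M) (Pi x A M')"
| beta_lam_dom: "beta enc dec chi A A' \<Longrightarrow> beta enc dec chi (Lam x A M) (Lam x A' M)"
| beta_pi_dom: "beta enc dec chi A A' \<Longrightarrow> beta enc dec chi (Pi x A M) (Pi x A' M)"
| beta_app_l: "beta enc dec chi M N \<Longrightarrow> beta enc dec chi (App M P) (App N P)"
| beta_app_r: "beta enc dec chi M N \<Longrightarrow> beta enc dec chi (App P M) (App P N)"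

definition beta_conv :: "('v \<Rightarrow> nat) \<Rightarrow> (nat \<Rightarrow> 'v) \<Rightarrow> (nat list \<Rightarrow> nat)
    \<Rightarrow> ('v, 'c) trm \<Rightarrow> ('v, 'c) trm \<Rightarrow> bool" where
  "beta_conv enc dec chi = equivclp (sup (alpha enc dec chi) (beta enc dec chi))"

type_synonym ('v, 'c) ctx = "('v \<times> ('v, 'c) trm) list"

text \<open>PTS judgments; Ax = axioms, Rl = rules. Context extension Gamma,x:A is (x,A) # Gamma.\<close>
inductive ctx_ok :: "('v \<Rightarrow> nat) \<Rightarrow> (nat \<Rightarrow> 'v) \<Rightarrow> (nat list \<Rightarrow> nat)
    \<Rightarrow> ('c \<Rightarrow> 'c \<Rightarrow> bool) \<Rightarrow> ('c \<Rightarrow> 'c \<Rightarrow> 'c \<Rightarrow> bool) \<Rightarrow> ('v, 'c) ctx \<Rightarrow> bool"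
  and typing :: "('v \<Rightarrow> nat) \<Rightarrow> (nat \<Rightarrow> 'v) \<Rightarrow> (nat list \<Rightarrow> nat)
    \<Rightarrow> ('c \<Rightarrow> 'c \<Rightarrow> bool) \<Rightarrow> ('c \<Rightarrow> 'c \<Rightarrow> 'c \<Rightarrow> bool) \<Rightarrow> ('v, 'c) ctx
    \<Rightarrow> ('v, 'c) trm \<Rightarrow> ('v, 'c) trm \<Rightarrow> bool"
  for enc dec chi Ax Rl where
  ok_nil: "ctx_ok enc dec chi Ax Rl []"
| ok_cons: "ctx_ok enc dec chi Ax Rl \<Gamma> \<Longrightarrow> typing enc dec chi Ax Rl \<Gamma> A (Const s) \<Longrightarrow>
     x \<notin> set (map fst \<Gamma>) \<Longrightarrow> ctx_ok enc dec chi Ax Rl ((x, A) # \<Gamma>)"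
| ty_sort: "ctx_ok enc dec chi Ax Rl \<Gamma> \<Longrightarrow> Ax s1 s2 \<Longrightarrow>
     typing enc dec chi Ax Rl \<Gamma> (Const s1) (Const s2)"
| ty_var: "ctx_ok enc dec chi Ax Rl \<Gamma> \<Longrightarrow> (x, A) \<in> set \<Gamma> \<Longrightarrow>
     typing enc dec chi Ax Rl \<Gamma> (Var x) A"
| ty_prod: "Rl s1 s2 s3 \<Longrightarrow> typing enc dec chi Ax Rl \<Gamma> A (Const s1) \<Longrightarrow>
     (\<forall>y. y \<notin> set (map fst \<Gamma>) \<longrightarrow>
        typing enc dec chi Ax Rl ((y, A) # \<Gamma>) (usubst enc dec chi B x (Var y)) (Const s2)) \<Longrightarrow>
     typing enc dec chi Ax Rl \<Gamma> (Pi x A B) (Const s3)"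
| ty_abs: "Rl s1 s2 s3 \<Longrightarrow> typing enc dec chi Ax Rl \<Gamma> A (Const s1) \<Longrightarrow>
     (\<forall>z. z \<notin> set (map fst \<Gamma>) \<longrightarrow>
        typing enc dec chi Ax Rl ((z, A) # \<Gamma>) (usubst enc dec chi B y (Var z)) (Const s2)) \<Longrightarrow>
     (\<forall>z. z \<notin> set (map fst \<Gamma>) \<longrightarrow>
        typing enc dec chi Ax Rl ((z, A) # \<Gamma>) (usubst enc dec chi M x (Var z))
          (usubst enc dec chi B y (Var z))) \<Longrightarrow>
     typing enc dec chi Ax Rl \<Gamma> (Lam x A M) (Pi y A B)"
| ty_app: "typing enc dec chi Ax Rl \<Gamma> M (Pi x A B) \<Longrightarrow> typing enc dec chi Ax Rl \<Gamma> N A \<Longrightarrow>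
     typing enc dec chi Ax Rl \<Gamma> (usubst enc dec chi B x N) (Const s) \<Longrightarrow>
     typing enc dec chi Ax Rl \<Gamma> (App M N) (usubst enc dec chi B x N)"
| ty_conv: "typing enc dec chi Ax Rl \<Gamma> M A \<Longrightarrow> beta_conv enc dec chi A B \<Longrightarrow>
     typing enc dec chi Ax Rl \<Gamma> B (Const s) \<Longrightarrow> typing enc dec chi Ax Rl \<Gamma> M B"

end

theory Submission
  imports Defs
begin

(* The action M \<bullet> \<sigma> renames each binder to a name determined by the free variables of
   the substituted body, which makes it strictly compositional:
   M \<bullet> \<sigma> \<bullet> \<tau> = M \<bullet> (\<lambda>u. \<sigma> u \<bullet> \<tau>).  Hence canon M = M \<bullet> Var is a canonical
   representative of the alpha-class of M: alpha-convertible terms have the same canon,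
   M \<bullet> \<sigma> depends only on canon M, and beta-conversion is preserved by substitution.

   The substitution lemma is proved by induction on typing for every substitution \<sigma>
   that maps \<Gamma> into a context \<Gamma>', in the stronger form that every P with
   canon P = canon (M \<bullet> \<sigma>) has type B \<bullet> \<sigma> in \<Gamma>'.  This slack is forced by the raw
   syntax: the premises of the abstraction and product rules speak about the body renamed
   to an arbitrary fresh z, which agrees with the substituted body only up to canon.
   The theorem is the instance \<sigma> = Var(x := N). *)

section \<open>Simultaneous substitution\<close>

locale name_supply =
  fixes enc :: "'v \<Rightarrow> nat" and dec :: "nat \<Rightarrow> 'v" and chi :: "nat list \<Rightarrow> nat"
  assumes enc_dec: "\<And>n. enc (dec n) = n"
    and chi_fresh: "\<And>ns. chi ns \<notin> set ns"
begin

abbreviation subst_act :: "('v, 'c) trm \<Rightarrow> ('v \<Rightarrow> ('v, 'c) trm) \<Rightarrow> ('v, 'c) trm"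
    (infixl "\<bullet>" 75) where
  "M \<bullet> \<sigma> \<equiv> sact enc dec chi M \<sigma>"

abbreviation subst1 :: "('v, 'c) trm \<Rightarrow> 'v \<Rightarrow> ('v, 'c) trm \<Rightarrow> ('v, 'c) trm"
    ("_\<langle>_ := _\<rangle>" [1000, 0, 0] 1000) where
  "M\<langle>x := N\<rangle> \<equiv> usubst enc dec chi M x N"

abbreviation canon :: "('v, 'c) trm \<Rightarrow> ('v, 'c) trm" where
  "canon M \<equiv> M \<bullet> Var"

abbreviation bname :: "('v \<Rightarrow> ('v, 'c) trm) \<Rightarrow> 'v \<Rightarrow> ('v, 'c) trm \<Rightarrow> 'v" where
  "bname \<sigma> x M \<equiv> Xfresh enc dec chi \<sigma> (removeAll x (fv M))"

abbreviation alpha_conv :: "('v, 'c) trm \<Rightarrow> ('v, 'c) trm \<Rightarrow> bool" (infix "\<sim>\<^sub>\<alpha>" 50) where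
  "M \<sim>\<^sub>\<alpha> N \<equiv> alpha enc dec chi M N"

abbreviation beta_step :: "('v, 'c) trm \<Rightarrow> ('v, 'c) trm \<Rightarrow> bool" (infix "\<rightarrow>\<^sub>\<beta>" 50) where
  "M \<rightarrow>\<^sub>\<beta> N \<equiv> beta enc dec chi M N"

abbreviation beta_equiv :: "('v, 'c) trm \<Rightarrow> ('v, 'c) trm \<Rightarrow> bool" (infix "=\<^sub>\<beta>" 50) where
  "M =\<^sub>\<beta> N \<equiv> beta_conv enc dec chi M N"

lemma Xfresh'_notin: "Xfresh' enc dec chi xs \<notin> set xs"
proof
  assume "Xfresh' enc dec chi xs \<in> set xs"
  then have "enc (dec (chi (map enc xs))) \<in> set (map enc xs)"
    unfolding Xfresh'_def by simp
  then show False using chi_fresh by (simp only: enc_dec)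
qed

lemma ex_fresh_var: "\<exists>w. w \<notin> set (xs :: 'v list)"
  using Xfresh'_notin by blast

lemma bname_fresh: "u \<in> set (fv M) \<Longrightarrow> u \<noteq> x \<Longrightarrow> bname \<sigma> x M \<notin> set (fv (\<sigma> u))"
  using Xfresh'_notin[of "concat (map (\<lambda>y. fv (\<sigma> y)) (removeAll x (fv M)))"]
  unfolding Xfresh_def by auto

lemma bname_Var: "bname Var x M = Xfresh' enc dec chi (removeAll x (fv M))"
  unfolding Xfresh_def by (induction "fv M") simp_all

lemma bname_cong:
  "(\<And>u. u \<in> set (fv M) \<Longrightarrow> u \<noteq> x \<Longrightarrow> \<sigma> u = \<tau> u) \<Longrightarrow> bname \<sigma> x M = bname \<tau> x M"
  unfolding Xfresh_def
  by (intro arg_cong[where f = "Xfresh' enc dec chi"] arg_cong[where f = concat] map_cong) auto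

lemma sact_Lam [simp]:
  "Lam x A M \<bullet> \<sigma> = Lam (bname \<sigma> x M) (A \<bullet> \<sigma>) (M \<bullet> \<sigma>(x := Var (bname \<sigma> x M)))"
  by (simp add: Let_def)

lemma sact_Pi [simp]:
  "Pi x A M \<bullet> \<sigma> = Pi (bname \<sigma> x M) (A \<bullet> \<sigma>) (M \<bullet> \<sigma>(x := Var (bname \<sigma> x M)))"
  by (simp add: Let_def)

declare sact.simps(4,5) [simp del]

lemma removeAll_concat_map_fresh:
  "(\<And>u. u \<in> set xs \<Longrightarrow> u \<noteq> x \<Longrightarrow> y \<notin> set (fv (\<sigma> u))) \<Longrightarrow>
   removeAll y (concat (map (\<lambda>u. fv (if u = x then Var y else \<sigma> u)) xs)) =
   concat (map (\<lambda>u. fv (\<sigma> u)) (removeAll x xs))"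
  by (induction xs) auto

lemma fv_sact: "fv (M \<bullet> \<sigma>) = concat (map (\<lambda>u. fv (\<sigma> u)) (fv M))"
  by (induction M arbitrary: \<sigma>) (simp_all add: removeAll_concat_map_fresh bname_fresh)

lemma removeAll_bname_fv_sact:
  "removeAll (bname \<sigma> x M) (fv (M \<bullet> \<sigma>(x := Var (bname \<sigma> x M)))) =
   concat (map (\<lambda>u. fv (\<sigma> u)) (removeAll x (fv M)))"
  by (simp add: fv_sact removeAll_concat_map_fresh bname_fresh)

lemma fv_usubst_Var: "fv (M\<langle>x := Var y\<rangle>) = map (\<lambda>u. if u = x then y else u) (fv M)"
proof -
  have "concat (map (\<lambda>u. fv ((Var(x := Var y)) u)) xs) = map (\<lambda>u. if u = x then y else u) xs"
    for xs :: "'v list"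
    by (induction xs) auto
  then show ?thesis by (simp only: usubst_def fv_sact)
qed

lemma sact_cong: "(\<And>u. u \<in> set (fv M) \<Longrightarrow> \<sigma> u = \<tau> u) \<Longrightarrow> M \<bullet> \<sigma> = M \<bullet> \<tau>"
proof (induction M arbitrary: \<sigma> \<tau>)
  case (Lam x A M)
  have "bname \<sigma> x M = bname \<tau> x M" by (rule bname_cong) (use Lam.prems in auto)
  moreover have "A \<bullet> \<sigma> = A \<bullet> \<tau>" by (rule Lam.IH(1)) (use Lam.prems in auto)
  moreover have "M \<bullet> \<sigma>(x := Var y) = M \<bullet> \<tau>(x := Var y)" for y
    by (rule Lam.IH(2)) (use Lam.prems in auto)
  ultimately show ?case by simp
next
  case (Pi x A M)
  have "bname \<sigma> x M = bname \<tau> x M" by (rule bname_cong) (use Pi.prems in auto)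
  moreover have "A \<bullet> \<sigma> = A \<bullet> \<tau>" by (rule Pi.IH(1)) (use Pi.prems in auto)
  moreover have "M \<bullet> \<sigma>(x := Var y) = M \<bullet> \<tau>(x := Var y)" for y
    by (rule Pi.IH(2)) (use Pi.prems in auto)
  ultimately show ?case by simp
next
  case (App M N)
  have "M \<bullet> \<sigma> = M \<bullet> \<tau>" by (rule App.IH(1)) (use App.prems in auto)
  moreover have "N \<bullet> \<sigma> = N \<bullet> \<tau>" by (rule App.IH(2)) (use App.prems in auto)
  ultimately show ?case by simp
qed simp_all

lemma sact_upd_fresh: "y \<notin> set (fv M) \<Longrightarrow> M \<bullet> \<sigma>(y := P) = M \<bullet> \<sigma>"
  by (rule sact_cong) auto

lemma concat_map_concat_map:
  "concat (map f (concat (map g xs))) = concat (map (\<lambda>u. concat (map f (g u))) xs)"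
  by (induction xs) auto

lemma bname_sact:
  "bname \<tau> (bname \<sigma> x M) (M \<bullet> \<sigma>(x := Var (bname \<sigma> x M))) = bname (\<lambda>u. \<sigma> u \<bullet> \<tau>) x M"
  unfolding Xfresh_def[of enc dec chi \<tau>] removeAll_bname_fv_sact
  by (simp add: Xfresh_def fv_sact concat_map_concat_map)

lemma sact_sact: "M \<bullet> \<sigma> \<bullet> \<tau> = M \<bullet> (\<lambda>u. \<sigma> u \<bullet> \<tau>)"
proof (induction M arbitrary: \<sigma> \<tau>)
  case (Lam x A M)
  let ?y = "bname \<sigma> x M"
  have "M \<bullet> \<sigma>(x := Var ?y) \<bullet> \<tau>(?y := Var z) = M \<bullet> (\<lambda>u. \<sigma> u \<bullet> \<tau>)(x := Var z)" for z
    unfolding Lam.IH(2) by (rule sact_cong) (auto simp: bname_fresh sact_upd_fresh)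
  then show ?case using Lam.IH(1) by (simp add: bname_sact)
next
  case (Pi x A M)
  let ?y = "bname \<sigma> x M"
  have "M \<bullet> \<sigma>(x := Var ?y) \<bullet> \<tau>(?y := Var z) = M \<bullet> (\<lambda>u. \<sigma> u \<bullet> \<tau>)(x := Var z)" for z
    unfolding Pi.IH(2) by (rule sact_cong) (auto simp: bname_fresh sact_upd_fresh)
  then show ?case using Pi.IH(1) by (simp add: bname_sact)
qed simp_all

lemma usubst_sact: "M\<langle>x := N\<rangle> \<bullet> \<sigma> = M \<bullet> \<sigma>(x := N \<bullet> \<sigma>)"
  unfolding usubst_def sact_sact by (rule sact_cong) simp

lemma usubst_sact_fresh_upd:
  assumes "\<And>u. u \<in> set (fv M) \<Longrightarrow> u \<noteq> x \<Longrightarrow> y \<notin> set (fv (\<sigma> u))"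
  shows "(M \<bullet> \<sigma>(x := Var y))\<langle>y := Q\<rangle> = M \<bullet> (\<lambda>u. canon (\<sigma> u))(x := Q)"
  unfolding usubst_def sact_sact by (rule sact_cong) (auto simp: assms sact_upd_fresh)

lemma usubst_bname_sact:
  "(M \<bullet> \<sigma>(x := Var (bname \<sigma> x M)))\<langle>bname \<sigma> x M := Q\<rangle> = M \<bullet> (\<lambda>u. canon (\<sigma> u))(x := Q)"
  by (rule usubst_sact_fresh_upd) (rule bname_fresh)

lemma usubst_Var_sact:
  assumes "y \<notin> set (removeAll x (fv M))"
  shows "M\<langle>x := Var y\<rangle> \<bullet> \<sigma>(y := P) = M \<bullet> \<sigma>(x := P)"
  unfolding usubst_def sact_sact by (rule sact_cong) (use assms in auto)

lemma usubst_usubst_Var: "y \<notin> set (removeAll x (fv M)) \<Longrightarrow> M\<langle>x := Var y\<rangle>\<langle>y := N\<rangle> = M\<langle>x := N\<rangle>"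
  using usubst_Var_sact[of y x M Var N] by (simp add: usubst_def)

section \<open>Canonical representatives of alpha-classes\<close>

lemma sact_canon: "canon M \<bullet> \<sigma> = M \<bullet> \<sigma>"
  by (simp add: sact_sact)

lemma canon_canon: "canon (canon M) = canon M"
  by (rule sact_canon)

lemma canon_eq_imp_sact_eq: "canon M = canon N \<Longrightarrow> M \<bullet> \<sigma> = N \<bullet> \<sigma>"
  by (metis sact_canon)

lemma canon_sact_eqI:
  "(\<And>u. u \<in> set (fv M) \<Longrightarrow> canon (\<sigma> u) = canon (\<tau> u)) \<Longrightarrow> canon (M \<bullet> \<sigma>) = canon (M \<bullet> \<tau>)"
  unfolding sact_sact by (rule sact_cong)

lemma canon_usubst_bname:
  "canon ((K \<bullet> \<sigma>(k := Var (bname \<sigma> k K)))\<langle>bname \<sigma> k K := Q\<rangle>) = canon (K \<bullet> \<sigma>(k := Q))"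
  unfolding usubst_bname_sact by (rule canon_sact_eqI) (simp add: canon_canon)

lemma removeAll_map_rename:
  "y \<notin> set (removeAll x xs) \<Longrightarrow> removeAll y (map (\<lambda>u. if u = x then y else u) xs) = removeAll x xs"
  by (induction xs) auto

lemma usubst_Var_eq_all:
  assumes "y \<notin> set (removeAll x (fv M))" "y \<notin> set (removeAll x' (fv M'))"
    and "M\<langle>x := Var y\<rangle> = M'\<langle>x' := Var y\<rangle>"
  shows "M\<langle>x := Var z\<rangle> = M'\<langle>x' := Var z\<rangle>"
  by (metis assms usubst_usubst_Var)

lemma canon_binder_body_eq_iff:
  "(bname Var y B = bname Var y' B' \<and>
    B\<langle>y := Var (bname Var y B)\<rangle> = B'\<langle>y' := Var (bname Var y' B')\<rangle>) \<longleftrightarrow>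
   (\<forall>z. B\<langle>y := Var z\<rangle> = B'\<langle>y' := Var z\<rangle>)"
proof
  assume eq: "bname Var y B = bname Var y' B' \<and>
    B\<langle>y := Var (bname Var y B)\<rangle> = B'\<langle>y' := Var (bname Var y' B')\<rangle>"
  show "\<forall>z. B\<langle>y := Var z\<rangle> = B'\<langle>y' := Var z\<rangle>"
    using eq usubst_Var_eq_all Xfresh'_notin unfolding bname_Var by metis
next
  assume all: "\<forall>z. B\<langle>y := Var z\<rangle> = B'\<langle>y' := Var z\<rangle>"
  obtain z where z: "z \<notin> set (removeAll y (fv B) @ removeAll y' (fv B'))"
    using ex_fresh_var by blast
  have "removeAll z (fv (B\<langle>y := Var z\<rangle>)) = removeAll z (fv (B'\<langle>y' := Var z\<rangle>))"
    using all by simp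
  then have "removeAll y (fv B) = removeAll y' (fv B')"
    using z unfolding fv_usubst_Var by (simp add: removeAll_map_rename)
  then show "bname Var y B = bname Var y' B' \<and>
    B\<langle>y := Var (bname Var y B)\<rangle> = B'\<langle>y' := Var (bname Var y' B')\<rangle>"
    using all unfolding bname_Var by simp
qed

lemma canon_Lam: "canon (Lam y T B) = Lam (bname Var y B) (canon T) (B\<langle>y := Var (bname Var y B)\<rangle>)"
  by (simp add: usubst_def)

lemma canon_Pi: "canon (Pi y T B) = Pi (bname Var y B) (canon T) (B\<langle>y := Var (bname Var y B)\<rangle>)"
  by (simp add: usubst_def)

lemma canon_Lam_eq_iff:
  "canon (Lam y T B) = canon (Lam y' T' B') \<longleftrightarrow>
   canon T = canon T' \<and> (\<forall>z. B\<langle>y := Var z\<rangle> = B'\<langle>y' := Var z\<rangle>)"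
  unfolding canon_Lam trm.inject canon_binder_body_eq_iff[symmetric] by blast

lemma canon_Pi_eq_iff:
  "canon (Pi y T B) = canon (Pi y' T' B') \<longleftrightarrow>
   canon T = canon T' \<and> (\<forall>z. B\<langle>y := Var z\<rangle> = B'\<langle>y' := Var z\<rangle>)"
  unfolding canon_Pi trm.inject canon_binder_body_eq_iff[symmetric] by blast

lemma canon_Lam_cong:
  "canon T = canon T' \<Longrightarrow> canon P = canon P' \<Longrightarrow> canon (Lam y T P) = canon (Lam y T' P')"
  unfolding canon_Lam_eq_iff usubst_def using canon_eq_imp_sact_eq[of P P'] by simp

lemma canon_Pi_cong:
  "canon T = canon T' \<Longrightarrow> canon P = canon P' \<Longrightarrow> canon (Pi y T P) = canon (Pi y T' P')"
  unfolding canon_Pi_eq_iff usubst_def using canon_eq_imp_sact_eq[of P P'] by simp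

lemma canon_eq_Var_iff: "canon P = Var z \<longleftrightarrow> P = Var z"
  by (cases P) simp_all

lemma canon_eq_Const_iff: "canon P = Const k \<longleftrightarrow> P = Const k"
  by (cases P) simp_all

lemma canon_eq_AppE:
  assumes "canon P = App M N"
  obtains P1 P2 where "P = App P1 P2" "canon P1 = M" "canon P2 = N"
  using assms by (cases P) simp_all

lemma canon_eq_LamE:
  assumes "canon P = canon (Lam y T B)"
  obtains y' T' B' where "P = Lam y' T' B'" "canon T' = canon T"
    "\<And>z. B'\<langle>y' := Var z\<rangle> = B\<langle>y := Var z\<rangle>"
proof (cases P)
  case (Lam y' T' B')
  then show ?thesis using that assms unfolding Lam canon_Lam_eq_iff by blast
qed (use assms in simp_all)

lemma canon_eq_PiE:
  assumes "canon P = canon (Pi y T B)"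
  obtains y' T' B' where "P = Pi y' T' B'" "canon T' = canon T"
    "\<And>z. B'\<langle>y' := Var z\<rangle> = B\<langle>y := Var z\<rangle>"
proof (cases P)
  case (Pi y' T' B')
  then show ?thesis using that assms unfolding Pi canon_Pi_eq_iff by blast
qed (use assms in simp_all)

section \<open>Alpha- and beta-conversion\<close>

lemma alpha_imp_canon_eq: "M \<sim>\<^sub>\<alpha> N \<Longrightarrow> canon M = canon N"
proof (induction rule: alpha.induct)
  case alpha_lam
  then show ?case unfolding canon_Lam_eq_iff using usubst_Var_eq_all by blast
next
  case alpha_pi
  then show ?case unfolding canon_Pi_eq_iff using usubst_Var_eq_all by blast
qed simp_all

lemma alpha_canon: "M \<sim>\<^sub>\<alpha> canon M"
proof (induction M)
  case (Lam x A M)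
  let ?w = "bname Var x M"
  have w: "?w \<notin> set (removeAll x (fv M))" unfolding bname_Var by (rule Xfresh'_notin)
  have "Lam x A M \<sim>\<^sub>\<alpha> Lam ?w (canon A) (M\<langle>x := Var ?w\<rangle>)"
    by (rule alpha_lam[OF Lam.IH(1) w]) (simp_all add: usubst_usubst_Var[OF w])
  then show ?case by (simp only: canon_Lam)
next
  case (Pi x A M)
  let ?w = "bname Var x M"
  have w: "?w \<notin> set (removeAll x (fv M))" unfolding bname_Var by (rule Xfresh'_notin)
  have "Pi x A M \<sim>\<^sub>\<alpha> Pi ?w (canon A) (M\<langle>x := Var ?w\<rangle>)"
    by (rule alpha_pi[OF Pi.IH(1) w]) (simp_all add: usubst_usubst_Var[OF w])
  then show ?case by (simp only: canon_Pi)
qed (auto intro: alpha.intros)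

lemma canon_eq_imp_beta_conv: "canon M = canon N \<Longrightarrow> M =\<^sub>\<beta> N"
proof -
  assume eq: "canon M = canon N"
  have "M =\<^sub>\<beta> canon M" "N =\<^sub>\<beta> canon N"
    unfolding beta_conv_def by (simp_all add: r_into_equivclp alpha_canon)
  with eq show ?thesis unfolding beta_conv_def by (metis equivclp_sym equivclp_trans)
qed

lemma beta_conv_refl: "M =\<^sub>\<beta> M"
  unfolding beta_conv_def by simp

lemma beta_conv_trans [trans]: "L =\<^sub>\<beta> M \<Longrightarrow> M =\<^sub>\<beta> N \<Longrightarrow> L =\<^sub>\<beta> N"
  unfolding beta_conv_def by (rule equivclp_trans)

lemma beta_imp_beta_conv: "M \<rightarrow>\<^sub>\<beta> N \<Longrightarrow> M =\<^sub>\<beta> N"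
  unfolding beta_conv_def by (simp add: r_into_equivclp)

lemma beta_conv_cong:
  assumes canon_cong: "\<And>a b. canon a = canon b \<Longrightarrow> canon (f a) = canon (f b)"
    and beta_cong: "\<And>a b. a \<rightarrow>\<^sub>\<beta> b \<Longrightarrow> f a =\<^sub>\<beta> f b"
    and "M =\<^sub>\<beta> N"
  shows "f M =\<^sub>\<beta> f N"
proof -
  have one_step: "f a =\<^sub>\<beta> f b" if "a \<sim>\<^sub>\<alpha> b \<or> a \<rightarrow>\<^sub>\<beta> b" for a b
    using that canon_cong beta_cong alpha_imp_canon_eq canon_eq_imp_beta_conv by blast
  from \<open>M =\<^sub>\<beta> N\<close> show ?thesis
    unfolding beta_conv_def
  proof (induction rule: equivclp_induct)
    case (step y z)
    then show ?case
      using one_step[of y z] one_step[of z y] unfolding beta_conv_def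
      by (metis equivclp_sym equivclp_trans sup2E)
  qed simp
qed

lemma beta_fv: "M \<rightarrow>\<^sub>\<beta> N \<Longrightarrow> set (fv N) \<subseteq> set (fv M)"
proof (induction rule: beta.induct)
  case (beta_base M N)
  then show ?case
    by (cases rule: beta_contr.cases) (auto simp: usubst_def fv_sact split: if_splits)
qed auto

lemma beta_conv_Lam: "T =\<^sub>\<beta> T' \<Longrightarrow> P =\<^sub>\<beta> P' \<Longrightarrow> Lam y T P =\<^sub>\<beta> Lam y T' P'"
proof -
  assume "T =\<^sub>\<beta> T'" "P =\<^sub>\<beta> P'"
  have "Lam y T P =\<^sub>\<beta> Lam y T' P"
    by (rule beta_conv_cong[where f = "\<lambda>T. Lam y T P", OF _ _ \<open>T =\<^sub>\<beta> T'\<close>])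
      (blast intro: canon_Lam_cong beta_imp_beta_conv beta.intros)+
  also have "Lam y T' P =\<^sub>\<beta> Lam y T' P'"
    by (rule beta_conv_cong[where f = "Lam y T'", OF _ _ \<open>P =\<^sub>\<beta> P'\<close>])
      (blast intro: canon_Lam_cong beta_imp_beta_conv beta.intros)+
  finally show ?thesis .
qed

lemma beta_conv_Pi: "T =\<^sub>\<beta> T' \<Longrightarrow> P =\<^sub>\<beta> P' \<Longrightarrow> Pi y T P =\<^sub>\<beta> Pi y T' P'"
proof -
  assume "T =\<^sub>\<beta> T'" "P =\<^sub>\<beta> P'"
  have "Pi y T P =\<^sub>\<beta> Pi y T' P"
    by (rule beta_conv_cong[where f = "\<lambda>T. Pi y T P", OF _ _ \<open>T =\<^sub>\<beta> T'\<close>])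
      (blast intro: canon_Pi_cong beta_imp_beta_conv beta.intros)+
  also have "Pi y T' P =\<^sub>\<beta> Pi y T' P'"
    by (rule beta_conv_cong[where f = "Pi y T'", OF _ _ \<open>P =\<^sub>\<beta> P'\<close>])
      (blast intro: canon_Pi_cong beta_imp_beta_conv beta.intros)+
  finally show ?thesis .
qed

lemma beta_conv_App: "M =\<^sub>\<beta> M' \<Longrightarrow> N =\<^sub>\<beta> N' \<Longrightarrow> App M N =\<^sub>\<beta> App M' N'"
proof -
  assume "M =\<^sub>\<beta> M'" "N =\<^sub>\<beta> N'"
  have "App M N =\<^sub>\<beta> App M' N"
    by (rule beta_conv_cong[where f = "\<lambda>M. App M N", OF _ _ \<open>M =\<^sub>\<beta> M'\<close>])
      (simp_all add: beta_imp_beta_conv beta.intros)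
  also have "App M' N =\<^sub>\<beta> App M' N'"
    by (rule beta_conv_cong[where f = "App M'", OF _ _ \<open>N =\<^sub>\<beta> N'\<close>])
      (simp_all add: beta_imp_beta_conv beta.intros)
  finally show ?thesis .
qed

lemma beta_sact: "M \<rightarrow>\<^sub>\<beta> N \<Longrightarrow> M \<bullet> \<sigma> =\<^sub>\<beta> N \<bullet> \<sigma>"
proof (induction arbitrary: \<sigma> rule: beta.induct)
  case (beta_base M N)
  then show ?case
  proof (cases rule: beta_contr.cases)
    case (1 x A M0 N0)
    let ?y = "bname \<sigma> x M0"
    let ?R = "(M0 \<bullet> \<sigma>(x := Var ?y))\<langle>?y := N0 \<bullet> \<sigma>\<rangle>"
    have "M \<bullet> \<sigma> =\<^sub>\<beta> ?R"
      unfolding 1 by (simp add: beta_imp_beta_conv beta.beta_base beta_contr.intros)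
    also have "canon ?R = canon (N \<bullet> \<sigma>)"
      unfolding 1 canon_usubst_bname by (simp only: usubst_sact)
    then have "?R =\<^sub>\<beta> N \<bullet> \<sigma>" by (rule canon_eq_imp_beta_conv)
    finally show ?thesis .
  qed
next
  case (beta_lam_body M M' x A)
  let ?y = "bname \<sigma> x M"
  have fresh: "?y \<notin> set (fv (\<sigma> u))" if "u \<in> set (fv M')" "u \<noteq> x" for u
    using that beta_fv[OF beta_lam_body.hyps] bname_fresh by blast
  have body: "(M' \<bullet> \<sigma>(x := Var ?y))\<langle>?y := Q\<rangle> = M' \<bullet> (\<lambda>u. canon (\<sigma> u))(x := Q)" for Q
    using fresh by (rule usubst_sact_fresh_upd)
  have "Lam x A M \<bullet> \<sigma> =\<^sub>\<beta> Lam ?y (A \<bullet> \<sigma>) (M' \<bullet> \<sigma>(x := Var ?y))"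
    by (simp add: beta_conv_Lam beta_conv_refl beta_lam_body.IH)
  also have "\<dots> =\<^sub>\<beta> Lam x A M' \<bullet> \<sigma>"
    unfolding sact_Lam
    by (rule canon_eq_imp_beta_conv)
      (simp only: canon_Lam_eq_iff body usubst_bname_sact, simp)
  finally show ?case .
next
  case (beta_pi_body M M' x A)
  let ?y = "bname \<sigma> x M"
  have fresh: "?y \<notin> set (fv (\<sigma> u))" if "u \<in> set (fv M')" "u \<noteq> x" for u
    using that beta_fv[OF beta_pi_body.hyps] bname_fresh by blast
  have body: "(M' \<bullet> \<sigma>(x := Var ?y))\<langle>?y := Q\<rangle> = M' \<bullet> (\<lambda>u. canon (\<sigma> u))(x := Q)" for Q
    using fresh by (rule usubst_sact_fresh_upd)
  have "Pi x A M \<bullet> \<sigma> =\<^sub>\<beta> Pi ?y (A \<bullet> \<sigma>) (M' \<bullet> \<sigma>(x := Var ?y))"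
    by (simp add: beta_conv_Pi beta_conv_refl beta_pi_body.IH)
  also have "\<dots> =\<^sub>\<beta> Pi x A M' \<bullet> \<sigma>"
    unfolding sact_Pi
    by (rule canon_eq_imp_beta_conv)
      (simp only: canon_Pi_eq_iff body usubst_bname_sact, simp)
  finally show ?case .
qed (simp_all add: beta_conv_Lam beta_conv_Pi beta_conv_App beta_conv_refl)

lemma beta_conv_sact: "M =\<^sub>\<beta> N \<Longrightarrow> M \<bullet> \<sigma> =\<^sub>\<beta> N \<bullet> \<sigma>"
  by (rule beta_conv_cong) (metis canon_eq_imp_sact_eq, rule beta_sact)

end

section \<open>Typing and the substitution lemma\<close>

locale pts = name_supply enc dec chi for enc :: "'v \<Rightarrow> nat" and dec and chi +
  fixes Ax :: "'c \<Rightarrow> 'c \<Rightarrow> bool" and Rl :: "'c \<Rightarrow> 'c \<Rightarrow> 'c \<Rightarrow> bool"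
begin

abbreviation ok :: "('v, 'c) ctx \<Rightarrow> bool" where
  "ok \<Gamma> \<equiv> ctx_ok enc dec chi Ax Rl \<Gamma>"

abbreviation has_type :: "('v, 'c) ctx \<Rightarrow> ('v, 'c) trm \<Rightarrow> ('v, 'c) trm \<Rightarrow> bool"
    ("_ \<turnstile> _ : _" [50, 50, 50] 50) where
  "\<Gamma> \<turnstile> M : B \<equiv> typing enc dec chi Ax Rl \<Gamma> M B"

lemma typing_ctx_ok: "\<Gamma> \<turnstile> M : B \<Longrightarrow> ok \<Gamma>"
  by (induction rule: ctx_ok_typing.inducts(2)[where ?P1.0 = "\<lambda>_. True"]) auto

lemma fv_ctx_ok_typing:
  shows "ok \<Gamma> \<Longrightarrow> (u, C) \<in> set \<Gamma> \<Longrightarrow> set (fv C) \<subseteq> set (map fst \<Gamma>)"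
    and "\<Gamma> \<turnstile> M : B \<Longrightarrow> set (fv M) \<subseteq> set (map fst \<Gamma>)"
proof (induction arbitrary: u C and rule: ctx_ok_typing.inducts)
  case (ty_prod s1 s2 s3 \<Gamma> A B x)
  obtain w where w: "w \<notin> set (map fst \<Gamma> @ fv B)" using ex_fresh_var by blast
  then have "set (fv (B\<langle>x := Var w\<rangle>)) \<subseteq> set (map fst ((w, A) # \<Gamma>))"
    using ty_prod(4) by simp
  then show ?case using ty_prod(3) w by (auto simp: fv_usubst_Var)
next
  case (ty_abs s1 s2 s3 \<Gamma> A B y M x)
  obtain w where w: "w \<notin> set (map fst \<Gamma> @ fv M)" using ex_fresh_var by blast
  then have "set (fv (M\<langle>x := Var w\<rangle>)) \<subseteq> set (map fst ((w, A) # \<Gamma>))"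
    using ty_abs(5) by simp
  then show ?case using ty_abs(3) w by (auto simp: fv_usubst_Var)
next
  case (ty_var \<Gamma> x A)
  then show ?case by force
qed auto

lemma typing_weaken: "\<Gamma> \<turnstile> M : B \<Longrightarrow> set \<Gamma> \<subseteq> set \<Delta> \<Longrightarrow> ok \<Delta> \<Longrightarrow> \<Delta> \<turnstile> M : B"
proof (induction arbitrary: \<Delta> rule: ctx_ok_typing.inducts(2)[where ?P1.0 = "\<lambda>_. True"])
  case (ty_prod s1 s2 s3 \<Gamma> A B x)
  have A: "\<Delta> \<turnstile> A : Const s1" using ty_prod by blast
  show ?case
  proof (rule ctx_ok_typing.ty_prod[OF ty_prod.hyps(1) A], intro allI impI)
    fix y assume y: "y \<notin> set (map fst \<Delta>)"
    then have "y \<notin> set (map fst \<Gamma>)" using ty_prod.prems(1) by auto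
    moreover have "set ((y, A) # \<Gamma>) \<subseteq> set ((y, A) # \<Delta>)" using ty_prod.prems(1) by auto
    ultimately show "(y, A) # \<Delta> \<turnstile> B\<langle>x := Var y\<rangle> : Const s2"
      using ty_prod.IH(2) ctx_ok_typing.ok_cons[OF ty_prod.prems(2) A y] by blast
  qed
next
  case (ty_abs s1 s2 s3 \<Gamma> A B y M x)
  have A: "\<Delta> \<turnstile> A : Const s1" using ty_abs by blast
  show ?case
  proof (rule ctx_ok_typing.ty_abs[OF ty_abs.hyps(1) A]; intro allI impI)
    fix z assume z: "z \<notin> set (map fst \<Delta>)"
    then have "z \<notin> set (map fst \<Gamma>)" using ty_abs.prems(1) by auto
    moreover have "set ((z, A) # \<Gamma>) \<subseteq> set ((z, A) # \<Delta>)" using ty_abs.prems(1) by auto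
    ultimately show "(z, A) # \<Delta> \<turnstile> B\<langle>y := Var z\<rangle> : Const s2"
      and "(z, A) # \<Delta> \<turnstile> M\<langle>x := Var z\<rangle> : B\<langle>y := Var z\<rangle>"
      using ty_abs.IH(2,3) ctx_ok_typing.ok_cons[OF ty_abs.prems(2) A z] by blast+
  qed
qed (blast intro: ctx_ok_typing.intros)+

definition typed_subst :: "('v, 'c) ctx \<Rightarrow> ('v \<Rightarrow> ('v, 'c) trm) \<Rightarrow> ('v, 'c) ctx \<Rightarrow> bool" where
  "typed_subst \<Gamma>' \<sigma> \<Gamma> \<longleftrightarrow>
     (\<forall>u C P. (u, C) \<in> set \<Gamma> \<longrightarrow> canon P = canon (\<sigma> u) \<longrightarrow> \<Gamma>' \<turnstile> P : C \<bullet> \<sigma>)"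

definition subst_stable :: "('v, 'c) ctx \<Rightarrow> ('v, 'c) trm \<Rightarrow> ('v, 'c) trm \<Rightarrow> bool" where
  "subst_stable \<Gamma> M B \<longleftrightarrow>
     (\<forall>\<Gamma>' \<sigma> P. ok \<Gamma>' \<longrightarrow> typed_subst \<Gamma>' \<sigma> \<Gamma> \<longrightarrow> canon P = canon (M \<bullet> \<sigma>) \<longrightarrow> \<Gamma>' \<turnstile> P : B \<bullet> \<sigma>)"

lemma typed_substI:
  "(\<And>u C P. (u, C) \<in> set \<Gamma> \<Longrightarrow> canon P = canon (\<sigma> u) \<Longrightarrow> \<Gamma>' \<turnstile> P : C \<bullet> \<sigma>) \<Longrightarrow>
   typed_subst \<Gamma>' \<sigma> \<Gamma>"
  unfolding typed_subst_def by blast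

lemma typed_substD:
  "typed_subst \<Gamma>' \<sigma> \<Gamma> \<Longrightarrow> (u, C) \<in> set \<Gamma> \<Longrightarrow> canon P = canon (\<sigma> u) \<Longrightarrow> \<Gamma>' \<turnstile> P : C \<bullet> \<sigma>"
  unfolding typed_subst_def by blast

lemma subst_stableI:
  "(\<And>\<Gamma>' \<sigma> P. ok \<Gamma>' \<Longrightarrow> typed_subst \<Gamma>' \<sigma> \<Gamma> \<Longrightarrow> canon P = canon (M \<bullet> \<sigma>) \<Longrightarrow> \<Gamma>' \<turnstile> P : B \<bullet> \<sigma>) \<Longrightarrow>
   subst_stable \<Gamma> M B"
  unfolding subst_stable_def by blast

lemma subst_stableD:
  "subst_stable \<Gamma> M B \<Longrightarrow> ok \<Gamma>' \<Longrightarrow> typed_subst \<Gamma>' \<sigma> \<Gamma> \<Longrightarrow> canon P = canon (M \<bullet> \<sigma>) \<Longrightarrow>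
   \<Gamma>' \<turnstile> P : B \<bullet> \<sigma>"
  unfolding subst_stable_def by blast

lemma typed_subst_weaken:
  "typed_subst \<Gamma>' \<sigma> \<Gamma> \<Longrightarrow> set \<Gamma>' \<subseteq> set \<Delta> \<Longrightarrow> ok \<Delta> \<Longrightarrow> typed_subst \<Delta> \<sigma> \<Gamma>"
  unfolding typed_subst_def using typing_weaken by blast

lemma typed_subst_extend:
  assumes \<sigma>: "typed_subst \<Gamma>' \<sigma> \<Gamma>" and ok: "ok ((z, T') # \<Gamma>')"
    and T': "canon T' = canon (T \<bullet> \<sigma>)" and T: "\<Gamma> \<turnstile> T : Const s"
    and T_stable: "subst_stable \<Gamma> T (Const s)" and w: "w \<notin> set (map fst \<Gamma>)"
  shows "typed_subst ((z, T') # \<Gamma>') (\<sigma>(w := Var z)) ((w, T) # \<Gamma>)"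
proof (rule typed_substI)
  fix u C P
  assume uC: "(u, C) \<in> set ((w, T) # \<Gamma>)" and P: "canon P = canon ((\<sigma>(w := Var z)) u)"
  let ?\<Delta> = "(z, T') # \<Gamma>'"
  have \<sigma>': "typed_subst ?\<Delta> \<sigma> \<Gamma>" using typed_subst_weaken[OF \<sigma> _ ok] by auto
  have ok\<Gamma>: "ok \<Gamma>" by (rule typing_ctx_ok[OF T])
  have fv_C: "w \<notin> set (fv C)" if "(u, C) \<in> set ((w, T) # \<Gamma>)" for u C
    using that w fv_ctx_ok_typing(1)[OF ok\<Gamma>] fv_ctx_ok_typing(2)[OF T] by auto
  then have C_\<sigma>: "C \<bullet> \<sigma>(w := Var z) = C \<bullet> \<sigma>" using uC by (simp add: sact_upd_fresh)
  show "?\<Delta> \<turnstile> P : C \<bullet> \<sigma>(w := Var z)"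
  proof (cases "u = w")
    case True
    then have "C = T" "P = Var z" using uC w P by (force simp: canon_eq_Var_iff)+
    have "?\<Delta> \<turnstile> Var z : T'" using ok by (simp add: ctx_ok_typing.ty_var)
    moreover have "?\<Delta> \<turnstile> T \<bullet> \<sigma> : Const s" using subst_stableD[OF T_stable ok \<sigma>' refl] by simp
    ultimately show ?thesis
      using ctx_ok_typing.ty_conv canon_eq_imp_beta_conv[OF T'] C_\<sigma> \<open>C = T\<close> \<open>P = Var z\<close> by metis
  next
    case False
    then show ?thesis using uC P C_\<sigma> typed_substD[OF \<sigma>'] by auto
  qed
qed

lemma typing_body_sact:
  assumes stable: "subst_stable ((w, T) # \<Gamma>) (K\<langle>k := Var w\<rangle>) C" and w: "w \<notin> set (fv K)"
    and \<sigma>: "typed_subst ((z, T') # \<Gamma>') (\<sigma>(w := Var z)) ((w, T) # \<Gamma>)" and ok: "ok ((z, T') # \<Gamma>')"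
  shows "(z, T') # \<Gamma>' \<turnstile> (K \<bullet> \<sigma>(k := Var (bname \<sigma> k K)))\<langle>bname \<sigma> k K := Var z\<rangle> : C \<bullet> \<sigma>(w := Var z)"
proof (rule subst_stableD[OF stable ok \<sigma>])
  have w': "w \<notin> set (removeAll k (fv K))" using w by simp
  show "canon ((K \<bullet> \<sigma>(k := Var (bname \<sigma> k K)))\<langle>bname \<sigma> k K := Var z\<rangle>) =
      canon (K\<langle>k := Var w\<rangle> \<bullet> \<sigma>(w := Var z))"
    by (simp only: canon_usubst_bname usubst_Var_sact[OF w'])
qed

lemma subst_stable_Pi:
  assumes Rl: "Rl s1 s2 s3" and A: "\<Gamma> \<turnstile> A : Const s1" and A_stable: "subst_stable \<Gamma> A (Const s1)"
    and B_stable: "\<And>w. w \<notin> set (map fst \<Gamma>) \<Longrightarrow>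
      subst_stable ((w, A) # \<Gamma>) (B\<langle>x := Var w\<rangle>) (Const s2)"
  shows "subst_stable \<Gamma> (Pi x A B) (Const s3)"
proof (rule subst_stableI)
  fix \<Gamma>' \<sigma> P
  assume ok: "ok \<Gamma>'" and \<sigma>: "typed_subst \<Gamma>' \<sigma> \<Gamma>" and P: "canon P = canon (Pi x A B \<bullet> \<sigma>)"
  let ?y = "bname \<sigma> x B"
  obtain y' T' B' where P_eq: "P = Pi y' T' B'" and T': "canon T' = canon (A \<bullet> \<sigma>)"
    and B': "\<And>z. B'\<langle>y' := Var z\<rangle> = (B \<bullet> \<sigma>(x := Var ?y))\<langle>?y := Var z\<rangle>"
    using P[unfolded sact_Pi[of x A B \<sigma>]] by (rule canon_eq_PiE) blast
  have T'_type: "\<Gamma>' \<turnstile> T' : Const s1" using subst_stableD[OF A_stable ok \<sigma> T'] by simp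
  have "\<Gamma>' \<turnstile> Pi y' T' B' : Const s3"
  proof (rule ctx_ok_typing.ty_prod[OF Rl T'_type], intro allI impI)
    fix z assume z: "z \<notin> set (map fst \<Gamma>')"
    obtain w where w\<Gamma>: "w \<notin> set (map fst \<Gamma>)" and wB: "w \<notin> set (fv B)"
      using ex_fresh_var[of "map fst \<Gamma> @ fv B"] by auto
    have ok_z: "ok ((z, T') # \<Gamma>')" by (rule ctx_ok_typing.ok_cons[OF ok T'_type z])
    have "typed_subst ((z, T') # \<Gamma>') (\<sigma>(w := Var z)) ((w, A) # \<Gamma>)"
      by (rule typed_subst_extend[OF \<sigma> ok_z T' A A_stable w\<Gamma>])
    from typing_body_sact[OF B_stable[OF w\<Gamma>] wB this ok_z]
    show "(z, T') # \<Gamma>' \<turnstile> B'\<langle>y' := Var z\<rangle> : Const s2" by (simp add: B')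
  qed
  then show "\<Gamma>' \<turnstile> P : Const s3 \<bullet> \<sigma>" by (simp add: P_eq)
qed

lemma typing_abs_body_sact:
  assumes ok: "ok ((z, T') # \<Gamma>')"
    and \<sigma>: "typed_subst ((z, T') # \<Gamma>') (\<sigma>(w := Var z)) ((w, A) # \<Gamma>)"
    and B_stable: "subst_stable ((w, A) # \<Gamma>) (B\<langle>y := Var w\<rangle>) (Const s)"
    and M_stable: "subst_stable ((w, A) # \<Gamma>) (M\<langle>x := Var w\<rangle>) (B\<langle>y := Var w\<rangle>)"
    and wB: "w \<notin> set (fv B)" and wM: "w \<notin> set (fv M)"
  shows "(z, T') # \<Gamma>' \<turnstile> (M \<bullet> \<sigma>(x := Var (bname \<sigma> x M)))\<langle>bname \<sigma> x M := Var z\<rangle>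
           : (B \<bullet> \<sigma>(y := Var (bname \<sigma> y B)))\<langle>bname \<sigma> y B := Var z\<rangle>"
proof -
  let ?B = "(B \<bullet> \<sigma>(y := Var (bname \<sigma> y B)))\<langle>bname \<sigma> y B := Var z\<rangle>"
  have "(z, T') # \<Gamma>' \<turnstile> (M \<bullet> \<sigma>(x := Var (bname \<sigma> x M)))\<langle>bname \<sigma> x M := Var z\<rangle>
          : B\<langle>y := Var w\<rangle> \<bullet> \<sigma>(w := Var z)"
    by (rule typing_body_sact[OF M_stable wM \<sigma> ok])
  moreover have "B\<langle>y := Var w\<rangle> \<bullet> \<sigma>(w := Var z) =\<^sub>\<beta> ?B"
  proof (rule canon_eq_imp_beta_conv)
    have wB': "w \<notin> set (removeAll y (fv B))" using wB by simp
    show "canon (B\<langle>y := Var w\<rangle> \<bullet> \<sigma>(w := Var z)) = canon ?B"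
      by (simp only: usubst_Var_sact[OF wB'] canon_usubst_bname)
  qed
  moreover have "(z, T') # \<Gamma>' \<turnstile> ?B : Const s"
    using typing_body_sact[OF B_stable wB \<sigma> ok] by simp
  ultimately show ?thesis by (rule ctx_ok_typing.ty_conv)
qed

lemma subst_stable_Lam:
  assumes Rl: "Rl s1 s2 s3" and A: "\<Gamma> \<turnstile> A : Const s1" and A_stable: "subst_stable \<Gamma> A (Const s1)"
    and B_stable: "\<And>w. w \<notin> set (map fst \<Gamma>) \<Longrightarrow>
      subst_stable ((w, A) # \<Gamma>) (B\<langle>y := Var w\<rangle>) (Const s2)"
    and M_stable: "\<And>w. w \<notin> set (map fst \<Gamma>) \<Longrightarrow>
      subst_stable ((w, A) # \<Gamma>) (M\<langle>x := Var w\<rangle>) (B\<langle>y := Var w\<rangle>)"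
  shows "subst_stable \<Gamma> (Lam x A M) (Pi y A B)"
proof (rule subst_stableI)
  fix \<Gamma>' \<sigma> P
  assume ok: "ok \<Gamma>'" and \<sigma>: "typed_subst \<Gamma>' \<sigma> \<Gamma>" and P: "canon P = canon (Lam x A M \<bullet> \<sigma>)"
  let ?x = "bname \<sigma> x M" and ?y = "bname \<sigma> y B"
  let ?B = "B \<bullet> \<sigma>(y := Var ?y)"
  obtain x' T' M' where P_eq: "P = Lam x' T' M'" and T': "canon T' = canon (A \<bullet> \<sigma>)"
    and M': "\<And>z. M'\<langle>x' := Var z\<rangle> = (M \<bullet> \<sigma>(x := Var ?x))\<langle>?x := Var z\<rangle>"
    using P[unfolded sact_Lam[of x A M \<sigma>]] by (rule canon_eq_LamE) blast
  have T'_type: "\<Gamma>' \<turnstile> T' : Const s1" using subst_stableD[OF A_stable ok \<sigma> T'] by simp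
  have body_types: "(z, T') # \<Gamma>' \<turnstile> ?B\<langle>?y := Var z\<rangle> : Const s2 \<and>
      (z, T') # \<Gamma>' \<turnstile> M'\<langle>x' := Var z\<rangle> : ?B\<langle>?y := Var z\<rangle>"
    if z: "z \<notin> set (map fst \<Gamma>')" for z
  proof
    obtain w where w\<Gamma>: "w \<notin> set (map fst \<Gamma>)" and wB: "w \<notin> set (fv B)" and wM: "w \<notin> set (fv M)"
      using ex_fresh_var[of "map fst \<Gamma> @ fv B @ fv M"] by auto
    have ok_z: "ok ((z, T') # \<Gamma>')" by (rule ctx_ok_typing.ok_cons[OF ok T'_type z])
    have \<sigma>_z: "typed_subst ((z, T') # \<Gamma>') (\<sigma>(w := Var z)) ((w, A) # \<Gamma>)"
      by (rule typed_subst_extend[OF \<sigma> ok_z T' A A_stable w\<Gamma>])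
    show "(z, T') # \<Gamma>' \<turnstile> ?B\<langle>?y := Var z\<rangle> : Const s2"
      using typing_body_sact[OF B_stable[OF w\<Gamma>] wB \<sigma>_z ok_z] by simp
    show "(z, T') # \<Gamma>' \<turnstile> M'\<langle>x' := Var z\<rangle> : ?B\<langle>?y := Var z\<rangle>"
      unfolding M' by (rule typing_abs_body_sact[OF ok_z \<sigma>_z B_stable[OF w\<Gamma>] M_stable[OF w\<Gamma>] wB wM])
  qed
  have "\<Gamma>' \<turnstile> Lam x' T' M' : Pi ?y T' ?B"
    using body_types by (intro ctx_ok_typing.ty_abs[OF Rl T'_type] allI impI) blast+
  moreover have "Pi ?y T' ?B =\<^sub>\<beta> Pi y A B \<bullet> \<sigma>"
    unfolding sact_Pi by (rule canon_eq_imp_beta_conv[OF canon_Pi_cong[OF T' refl]])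
  moreover have "\<Gamma>' \<turnstile> Pi y A B \<bullet> \<sigma> : Const s3"
    using subst_stableD[OF subst_stable_Pi[OF Rl A A_stable B_stable] ok \<sigma> refl] by simp
  ultimately show "\<Gamma>' \<turnstile> P : Pi y A B \<bullet> \<sigma>"
    unfolding P_eq by (rule ctx_ok_typing.ty_conv)
qed

lemma subst_stable_App:
  assumes M_stable: "subst_stable \<Gamma> M (Pi x A B)" and N_stable: "subst_stable \<Gamma> N A"
    and B_stable: "subst_stable \<Gamma> (B\<langle>x := N\<rangle>) (Const s)"
  shows "subst_stable \<Gamma> (App M N) (B\<langle>x := N\<rangle>)"
proof (rule subst_stableI)
  fix \<Gamma>' \<sigma> P
  assume ok: "ok \<Gamma>'" and \<sigma>: "typed_subst \<Gamma>' \<sigma> \<Gamma>" and P: "canon P = canon (App M N \<bullet> \<sigma>)"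
  obtain P1 P2 where P_eq: "P = App P1 P2"
    and P1: "canon P1 = canon (M \<bullet> \<sigma>)" and P2: "canon P2 = canon (N \<bullet> \<sigma>)"
    using P by (auto elim: canon_eq_AppE)
  let ?y = "bname \<sigma> x B"
  let ?R = "(B \<bullet> \<sigma>(x := Var ?y))\<langle>?y := P2\<rangle>"
  have "canon ?R = canon (B \<bullet> \<sigma>(x := P2))" by (rule canon_usubst_bname)
  also have "\<dots> = canon (B \<bullet> \<sigma>(x := N \<bullet> \<sigma>))" by (rule canon_sact_eqI) (simp add: P2)
  finally have R: "canon ?R = canon (B\<langle>x := N\<rangle> \<bullet> \<sigma>)" by (simp only: usubst_sact)
  have "\<Gamma>' \<turnstile> P1 : Pi ?y (A \<bullet> \<sigma>) (B \<bullet> \<sigma>(x := Var ?y))"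
    using subst_stableD[OF M_stable ok \<sigma> P1] by simp
  moreover have "\<Gamma>' \<turnstile> P2 : A \<bullet> \<sigma>" by (rule subst_stableD[OF N_stable ok \<sigma> P2])
  moreover have "\<Gamma>' \<turnstile> ?R : Const s" using subst_stableD[OF B_stable ok \<sigma> R] by simp
  ultimately have "\<Gamma>' \<turnstile> App P1 P2 : ?R" by (rule ctx_ok_typing.ty_app)
  moreover have "\<Gamma>' \<turnstile> B\<langle>x := N\<rangle> \<bullet> \<sigma> : Const s" using subst_stableD[OF B_stable ok \<sigma> refl] by simp
  ultimately show "\<Gamma>' \<turnstile> P : B\<langle>x := N\<rangle> \<bullet> \<sigma>"
    unfolding P_eq by (rule ctx_ok_typing.ty_conv[OF _ canon_eq_imp_beta_conv[OF R]])
qed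

lemma subst_stable_conv:
  assumes "subst_stable \<Gamma> M A" "A =\<^sub>\<beta> B" "subst_stable \<Gamma> B (Const s)"
  shows "subst_stable \<Gamma> M B"
proof (rule subst_stableI)
  fix \<Gamma>' \<sigma> P
  assume ok: "ok \<Gamma>'" and \<sigma>: "typed_subst \<Gamma>' \<sigma> \<Gamma>" and P: "canon P = canon (M \<bullet> \<sigma>)"
  have "\<Gamma>' \<turnstile> P : A \<bullet> \<sigma>" by (rule subst_stableD[OF assms(1) ok \<sigma> P])
  moreover have "\<Gamma>' \<turnstile> B \<bullet> \<sigma> : Const s" using subst_stableD[OF assms(3) ok \<sigma> refl] by simp
  ultimately show "\<Gamma>' \<turnstile> P : B \<bullet> \<sigma>"
    by (rule ctx_ok_typing.ty_conv[OF _ beta_conv_sact[OF assms(2)]])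
qed

lemma typing_subst_stable: "\<Gamma> \<turnstile> M : B \<Longrightarrow> subst_stable \<Gamma> M B"
proof (induction rule: ctx_ok_typing.inducts(2)[where ?P1.0 = "\<lambda>_. True"])
  case (ty_sort \<Gamma> s1 s2)
  show ?case
    using ty_sort.hyps by (intro subst_stableI) (auto simp: canon_eq_Const_iff intro: ctx_ok_typing.ty_sort)
next
  case (ty_var \<Gamma> x A)
  show ?case using ty_var.hyps by (intro subst_stableI) (auto intro: typed_substD)
next
  case (ty_prod s1 s2 s3 \<Gamma> A B x)
  show ?case by (rule subst_stable_Pi[OF ty_prod.hyps(1,2) ty_prod.IH(1)]) (use ty_prod.IH(2) in blast)
next
  case (ty_abs s1 s2 s3 \<Gamma> A B y M x)
  show ?case by (rule subst_stable_Lam[OF ty_abs.hyps(1,2) ty_abs.IH(1)]) (use ty_abs.IH(2,3) in blast)+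
next
  case (ty_app \<Gamma> M x A B N s)
  show ?case by (rule subst_stable_App[OF ty_app.IH])
next
  case (ty_conv \<Gamma> M A B s)
  show ?case by (rule subst_stable_conv[OF ty_conv.IH(1) ty_conv.hyps(2) ty_conv.IH(2)])
qed simp_all

lemma typing_sact: "\<Gamma> \<turnstile> M : B \<Longrightarrow> ok \<Gamma>' \<Longrightarrow> typed_subst \<Gamma>' \<sigma> \<Gamma> \<Longrightarrow> \<Gamma>' \<turnstile> M \<bullet> \<sigma> : B \<bullet> \<sigma>"
  using subst_stableD[OF typing_subst_stable] by blast

lemma typed_subst_Var: "ok \<Gamma> \<Longrightarrow> typed_subst \<Gamma> Var \<Gamma>"
proof (induction \<Gamma>)
  case Nil
  show ?case by (simp add: typed_subst_def)
next
  case (Cons p \<Gamma>)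
  obtain v D where p: "p = (v, D)" by fastforce
  let ?\<Delta> = "(v, D) # \<Gamma>"
  have ok: "ok ?\<Delta>" using Cons.prems p by simp
  then obtain s where ok\<Gamma>: "ok \<Gamma>" and D: "\<Gamma> \<turnstile> D : Const s"
    by (cases rule: ctx_ok.cases) auto
  have id\<Gamma>: "typed_subst ?\<Delta> Var \<Gamma>"
    using typed_subst_weaken[OF Cons.IH[OF ok\<Gamma>] _ ok] by auto
  have "\<Gamma> \<turnstile> canon D : Const s" using typing_sact[OF D ok\<Gamma> Cons.IH[OF ok\<Gamma>]] by simp
  then have canon_D: "?\<Delta> \<turnstile> canon D : Const s" by (rule typing_weaken[OF _ _ ok]) auto
  have "?\<Delta> \<turnstile> Var v : canon D"
    by (rule ctx_ok_typing.ty_conv[OF ctx_ok_typing.ty_var[OF ok, of v D] _ canon_D])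
      (simp_all add: canon_eq_imp_beta_conv canon_canon)
  then show ?case
    unfolding p using typed_substD[OF id\<Gamma>] by (intro typed_substI) (auto simp: canon_eq_Var_iff)
qed

lemma typed_subst_single:
  assumes ok: "ok ((x, A) # \<Gamma>)" and N: "\<Gamma> \<turnstile> N : A"
  shows "typed_subst \<Gamma> (Var(x := N)) ((x, A) # \<Gamma>)"
proof (rule typed_substI)
  fix u C P
  assume uC: "(u, C) \<in> set ((x, A) # \<Gamma>)" and P: "canon P = canon ((Var(x := N)) u)"
  obtain s where ok\<Gamma>: "ok \<Gamma>" and A: "\<Gamma> \<turnstile> A : Const s" and x: "x \<notin> set (map fst \<Gamma>)"
    using ok by (cases rule: ctx_ok.cases) auto
  have id\<Gamma>: "typed_subst \<Gamma> Var \<Gamma>" by (rule typed_subst_Var[OF ok\<Gamma>])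
  have "x \<notin> set (fv C)"
    using uC x fv_ctx_ok_typing(1)[OF ok\<Gamma>] fv_ctx_ok_typing(2)[OF A] by auto
  then have C: "C \<bullet> Var(x := N) = canon C" by (rule sact_upd_fresh)
  show "\<Gamma> \<turnstile> P : C \<bullet> Var(x := N)"
  proof (cases "u = x")
    case True
    then have "C = A" using uC x by force
    moreover have "canon P = canon (N \<bullet> Var)" using P True by (simp add: canon_canon)
    ultimately show ?thesis
      using subst_stableD[OF typing_subst_stable[OF N] ok\<Gamma> id\<Gamma>] C by simp
  next
    case False
    then show ?thesis using uC P C typed_substD[OF id\<Gamma>] by auto
  qed
qed

lemma typing_usubst:
  assumes M: "(x, A) # \<Gamma> \<turnstile> M : B" and N: "\<Gamma> \<turnstile> N : A"
  shows "\<Gamma> \<turnstile> M\<langle>x := N\<rangle> : B\<langle>x := N\<rangle>"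
proof -
  have ok: "ok ((x, A) # \<Gamma>)" by (rule typing_ctx_ok[OF M])
  then have "ok \<Gamma>" by (cases rule: ctx_ok.cases) auto
  then show ?thesis
    unfolding usubst_def by (rule typing_sact[OF M _ typed_subst_single[OF ok N]])
qed

end

theorem mainTheorem17:
  fixes enc :: "'v \<Rightarrow> nat" and dec :: "nat \<Rightarrow> 'v" and chi :: "nat list \<Rightarrow> nat"
    and Ax :: "'c \<Rightarrow> 'c \<Rightarrow> bool" and Rl :: "'c \<Rightarrow> 'c \<Rightarrow> 'c \<Rightarrow> bool"
    and \<Gamma> :: "('v, 'c) ctx" and M N A B :: "('v, 'c) trm" and x :: 'v
  assumes enc_dec: "\<forall>n. enc (dec n) = n"
    and chi_fresh: "\<forall>ns. chi ns \<notin> set ns"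
    and hM: "typing enc dec chi Ax Rl ((x, A) # \<Gamma>) M B"
    and hN: "typing enc dec chi Ax Rl \<Gamma> N A"
  shows "typing enc dec chi Ax Rl \<Gamma> (usubst enc dec chi M x N) (usubst enc dec chi B x N)"
proof -
  interpret pts enc dec chi Ax Rl
    using enc_dec chi_fresh by unfold_locales blast+
  show ?thesis using hM hN by (rule typing_usubst)
qed

end
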